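(* Let $\alpha>0$ and $0<\beta<\frac14$. Consider the model $Y_i=f(x_i)+V^{1/2}(x_i)\xi_i$, $i=0,\dots,n$, $x_i=i/n$, with $\xi_0,\dots,\xi_n$ i.i.d. with distribution $P_\xi\in\Xi$. For every $\eta\in(0,1)$ there exists $c_\eta>0$ not depending on $n$ such that for all $0<c<c_\eta$ and all $n$ sufficiently large depending only on $\eta$, $$\inf_\varphi\left\{\sup_{f\in\mathcal{H}_\alpha,\,V\in\mathcal{D}_0,\,P_\xi\in\Xi}P_{f,V,P_\xi}\{\varphi=1\}+\sup_{f\in\mathcal{H}_\alpha,\,V\in\mathcal{D}_{1,\beta}(cn^{-\beta}),\,P_\xi\in\Xi}P_{f,V,P_\xi}\{\varphi=0\}\right\}\ge1-\eta,$$ where the infimum is over all tests $\varphi$ (measurable functions of $(Y_0,\dots,Y_n)$ into $\{0,1\}$).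
   Context: $\mathcal{H}_\alpha=\mathcal{H}_\alpha(M)$: functions $g:[0,1]\to\mathbb{R}$ with $|g^{(\lfloor\alpha\rfloor)}(x)-g^{(\lfloor\alpha\rfloor)}(y)|\le M|x-y|^{\alpha-\lfloor\alpha\rfloor}$ for all $x,y$ and $\|g^{(k)}\|_\infty\le M$ for $k=0,\dots,\lfloor\alpha\rfloor$; $M$ is a fixed sufficiently large constant. $\mathcal{D}_0=\{V:[0,1]\to[0,\infty):V(x_i)=\sigma^2\ \forall i\text{ for some }0\le\sigma^2\le M\}$; $\mathcal{D}_{1,\beta}(\varepsilon)=\{V\in\mathcal{H}_\beta:V\ge0,\ \sqrt{\frac1{n+1}\sum_{i=0}^n(V(x_i)-\bar V_n)^2}\ge\varepsilon\}$, $\bar V_n=\frac1{n+1}\sum_{i=0}^nV(x_i)$. $\Xi$ is the set of probability distributions $P_\xi$ with $E\xi=0$, $E\xi^2=1$, $E\xi^4\le C_\xi$ for $\xi\sim P_\xi$, $C_\xi$ a large universal constant. $P_{f,V,P_\xi}$ is the law of the data. *)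

theory Defs
  imports "HOL-Probability.Probability"
begin

definition design :: "nat \<Rightarrow> nat \<Rightarrow> real" where
  "design n i = real i / real n"

definition hoelder :: "real \<Rightarrow> real \<Rightarrow> (real \<Rightarrow> real) \<Rightarrow> bool" where
  "hoelder \<alpha> M g \<longleftrightarrow>
     (\<exists>D :: nat \<Rightarrow> real \<Rightarrow> real.
        (\<forall>x\<in>{0..1}. D 0 x = g x) \<and>
        (\<forall>k<nat \<lfloor>\<alpha>\<rfloor>. \<forall>x\<in>{0..1}.
            (D k has_real_derivative D (Suc k) x) (at x within {0..1})) \<and>
        (\<forall>k\<le>nat \<lfloor>\<alpha>\<rfloor>. \<forall>x\<in>{0..1}. \<bar>D k x\<bar> \<le> M) \<and>
        (\<forall>x\<in>{0..1}. \<forall>y\<in>{0..1}.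
            \<bar>D (nat \<lfloor>\<alpha>\<rfloor>) x - D (nat \<lfloor>\<alpha>\<rfloor>) y\<bar> \<le> M * \<bar>x - y\<bar> powr (\<alpha> - of_int \<lfloor>\<alpha>\<rfloor>)))"

definition D0 :: "real \<Rightarrow> nat \<Rightarrow> (real \<Rightarrow> real) set" where
  "D0 M n = {V. (\<forall>x\<in>{0..1}. V x \<ge> 0) \<and>
                (\<exists>\<sigma>2. 0 \<le> \<sigma>2 \<and> \<sigma>2 \<le> M \<and> (\<forall>i\<le>n. V (design n i) = \<sigma>2))}"

definition Vbar :: "nat \<Rightarrow> (real \<Rightarrow> real) \<Rightarrow> real" where
  "Vbar n V = (\<Sum>i\<le>n. V (design n i)) / real (n + 1)"

definition D1 :: "real \<Rightarrow> real \<Rightarrow> nat \<Rightarrow> real \<Rightarrow> (real \<Rightarrow> real) set" where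
  "D1 M \<beta> n \<epsilon> = {V. hoelder \<beta> M V \<and> (\<forall>x\<in>{0..1}. V x \<ge> 0) \<and>
      sqrt ((\<Sum>i\<le>n. (V (design n i) - Vbar n V)\<^sup>2) / real (n + 1)) \<ge> \<epsilon>}"

definition Xi :: "real \<Rightarrow> real measure set" where
  "Xi C\<xi> = {P. prob_space P \<and> sets P = sets borel \<and>
      integrable P (\<lambda>z. z) \<and> integrable P (\<lambda>z. z\<^sup>2) \<and> integrable P (\<lambda>z. z ^ 4) \<and>
      (\<integral>z. z \<partial>P) = 0 \<and> (\<integral>z. z\<^sup>2 \<partial>P) = 1 \<and> (\<integral>z. z ^ 4 \<partial>P) \<le> C\<xi>}"

definition data_law :: "nat \<Rightarrow> (real \<Rightarrow> real) \<Rightarrow> (real \<Rightarrow> real) \<Rightarrow> real measure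
                        \<Rightarrow> (nat \<Rightarrow> real) measure" where
  "data_law n f V P = (\<Pi>\<^sub>M i\<in>{..n}. distr P borel
       (\<lambda>z. f (design n i) + sqrt (V (design n i)) * z))"

text \<open>Tests: measurable functions of (Y_0,...,Y_n) into {0,1} (True = 1).\<close>
definition tests :: "nat \<Rightarrow> ((nat \<Rightarrow> real) \<Rightarrow> bool) set" where
  "tests n = measurable (\<Pi>\<^sub>M i\<in>{..n}. (borel :: real measure)) (count_space UNIV)"

end

theory Submission
  imports Defs
begin

(* Because the noise law is only restricted through its first four moments, a change of
   variance can be absorbed into the noise. Take f = 0, V = 1 and noise
   sqrt (1 + s h) * r with r Rademacher and s an independent fair sign, where
   h = 2 c n powr (-beta). The law of (Y_0, ..., Y_n) is then exactly the mixture over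
   fair signs s_0, ..., s_n of the laws with Rademacher noise and variances
   1 + s_i h at the design points. Because 2 h <= n powr (-beta), these values extend
   to a beta-Hoelder variance (McShane extension). If the signs are balanced, which by
   Hoeffding fails with probability at most 2 exp (-(n + 1) / 8), the empirical
   standard deviation of the variance is at least h / 2 = c n powr (-beta). So every
   test rejects this null with probability at least
   P(balanced) * (1 - worst type II error). *)

lemma powr_add_le_add_powr:
  fixes a b \<beta> :: real
  assumes "0 \<le> a" "0 \<le> b" "0 < \<beta>" "\<beta> \<le> 1"
  shows "(a + b) powr \<beta> \<le> a powr \<beta> + b powr \<beta>"
proof (cases "a + b = 0")
  case True
  then show ?thesis using assms by simp
next
  case False
  then have ab: "0 < a + b" using assms by simp
  have le_powr: "x \<le> x powr \<beta>" if "0 \<le> x" "x \<le> 1" for x :: real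
    using that assms powr_mono'[of \<beta> 1 x] by (cases "x = 0") auto
  have "1 = a / (a + b) + b / (a + b)"
    using ab by (simp add: add_divide_distrib[symmetric])
  also have "\<dots> \<le> (a / (a + b)) powr \<beta> + (b / (a + b)) powr \<beta>"
    using assms ab by (intro add_mono le_powr) (simp_all add: divide_simps)
  also have "\<dots> = (a powr \<beta> + b powr \<beta>) / (a + b) powr \<beta>"
    using assms ab by (simp add: powr_divide add_divide_distrib)
  finally show ?thesis using ab by (simp add: divide_simps)
qed

lemma hoelderI_less_one:
  assumes "0 \<le> \<beta>" "\<beta> < 1"
    and "\<And>x. x \<in> {0..1} \<Longrightarrow> \<bar>g x\<bar> \<le> M"
    and "\<And>x y. x \<in> {0..1} \<Longrightarrow> y \<in> {0..1} \<Longrightarrow> \<bar>g x - g y\<bar> \<le> M * \<bar>x - y\<bar> powr \<beta>"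
  shows "hoelder \<beta> M g"
proof -
  have "\<lfloor>\<beta>\<rfloor> = 0" using assms by (simp add: floor_eq_iff)
  then show ?thesis
    unfolding hoelder_def using assms by (intro exI[of _ "\<lambda>_. g"]) auto
qed

lemma hoelder_zero: "0 \<le> M \<Longrightarrow> hoelder \<alpha> M (\<lambda>_. 0)"
  unfolding hoelder_def by (intro exI[of _ "\<lambda>_ _. 0"]) auto

(* McShane extension of the values v j at the design points: the largest function with
   Hoelder-beta constant 1 that lies below v j at each design point j. *)
definition mcshane_ext :: "nat \<Rightarrow> real \<Rightarrow> (nat \<Rightarrow> real) \<Rightarrow> real \<Rightarrow> real" where
  "mcshane_ext n \<beta> v x = Min ((\<lambda>j. v j + \<bar>x - design n j\<bar> powr \<beta>) ` {..n})"

lemma mcshane_ext_hoelder: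
  assumes "0 < \<beta>" "\<beta> \<le> 1"
  shows "\<bar>mcshane_ext n \<beta> v x - mcshane_ext n \<beta> v y\<bar> \<le> \<bar>x - y\<bar> powr \<beta>"
proof -
  have le: "mcshane_ext n \<beta> v x \<le> mcshane_ext n \<beta> v y + \<bar>x - y\<bar> powr \<beta>" for x y
  proof -
    have "mcshane_ext n \<beta> v y \<in> (\<lambda>j. v j + \<bar>y - design n j\<bar> powr \<beta>) ` {..n}"
      unfolding mcshane_ext_def by (intro Min_in) auto
    then obtain j where j: "j \<le> n" "mcshane_ext n \<beta> v y = v j + \<bar>y - design n j\<bar> powr \<beta>"
      by auto
    have "mcshane_ext n \<beta> v x \<le> v j + \<bar>x - design n j\<bar> powr \<beta>"
      unfolding mcshane_ext_def using j(1) by (intro Min_le) auto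
    also have "\<bar>x - design n j\<bar> powr \<beta> \<le> (\<bar>x - y\<bar> + \<bar>y - design n j\<bar>) powr \<beta>"
      using assms by (intro powr_mono2) auto
    also have "\<dots> \<le> \<bar>x - y\<bar> powr \<beta> + \<bar>y - design n j\<bar> powr \<beta>"
      using assms by (intro powr_add_le_add_powr) auto
    finally show ?thesis using j(2) by simp
  qed
  show ?thesis using le[of x y] le[of y x] by (simp add: abs_minus_commute)
qed

lemma mcshane_ext_design:
  assumes "1 \<le> n" "0 < \<beta>" "i \<le> n"
    and osc: "\<And>j k. j \<le> n \<Longrightarrow> k \<le> n \<Longrightarrow> v k - v j \<le> real n powr (-\<beta>)"
  shows "mcshane_ext n \<beta> v (design n i) = v i"
  unfolding mcshane_ext_def
proof (rule Min_eqI)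
  fix y assume "y \<in> (\<lambda>j. v j + \<bar>design n i - design n j\<bar> powr \<beta>) ` {..n}"
  then obtain j where j: "j \<le> n" "y = v j + \<bar>design n i - design n j\<bar> powr \<beta>" by auto
  show "v i \<le> y"
  proof (cases "j = i")
    case False
    then have "1 / real n \<le> \<bar>design n i - design n j\<bar>"
      using assms by (simp add: design_def diff_divide_distrib[symmetric] abs_div divide_right_mono)
    then have "(1 / real n) powr \<beta> \<le> \<bar>design n i - design n j\<bar> powr \<beta>"
      using assms by (intro powr_mono2) auto
    moreover have "(1 / real n) powr \<beta> = real n powr (-\<beta>)"
      using assms by (simp add: powr_divide powr_minus_divide)
    ultimately show ?thesis using osc[OF j(1) \<open>i \<le> n\<close>] j by simp
  qed (use j in simp)
next
  show "v i \<in> (\<lambda>j. v j + \<bar>design n i - design n j\<bar> powr \<beta>) ` {..n}"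
    using \<open>i \<le> n\<close> by (intro image_eqI[of _ _ i]) auto
qed simp

lemma mcshane_ext_bounds:
  assumes "0 < \<beta>" "\<And>j. j \<le> n \<Longrightarrow> 0 \<le> v j \<and> v j \<le> B" "x \<in> {0..1}"
  shows "0 \<le> mcshane_ext n \<beta> v x" "mcshane_ext n \<beta> v x \<le> B + 1"
proof -
  show "0 \<le> mcshane_ext n \<beta> v x"
    unfolding mcshane_ext_def using assms by (subst Min_ge_iff) auto
  have "mcshane_ext n \<beta> v x \<le> v 0 + \<bar>x - design n 0\<bar> powr \<beta>"
    unfolding mcshane_ext_def by (intro Min_le) auto
  also have "\<bar>x - design n 0\<bar> powr \<beta> \<le> 1"
    using assms by (auto simp: design_def intro!: powr_le1)
  finally show "mcshane_ext n \<beta> v x \<le> B + 1" using assms(2)[of 0] by simp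
qed

lemma empirical_variance_signs:
  fixes s :: "nat \<Rightarrow> real"
  assumes "\<And>i. i \<le> n \<Longrightarrow> (s i)\<^sup>2 = 1"
  defines "m \<equiv> (\<Sum>i\<le>n. s i) / real (n + 1)"
  shows "(\<Sum>i\<le>n. (a + h * s i - (\<Sum>j\<le>n. a + h * s j) / real (n + 1))\<^sup>2) / real (n + 1)
           = h\<^sup>2 * (1 - m\<^sup>2)"
proof -
  define N where "N = real (n + 1)"
  have N: "0 < N" by (simp add: N_def)
  have mean: "(\<Sum>j\<le>n. a + h * s j) / N = a + h * m"
    using N by (simp add: sum.distrib sum_distrib_left[symmetric] m_def N_def field_simps)
  have squares: "(\<Sum>i\<le>n. (s i)\<^sup>2) = N"
    using assms(1) by (simp add: N_def)
  have signs: "(\<Sum>i\<le>n. s i) = N * m"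
    using N by (simp add: m_def N_def)
  have "(\<Sum>i\<le>n. (a + h * s i - (a + h * m))\<^sup>2)
        = h\<^sup>2 * ((\<Sum>i\<le>n. (s i)\<^sup>2) - 2 * m * (\<Sum>i\<le>n. s i) + N * m\<^sup>2)"
    by (simp add: power2_eq_square algebra_simps sum.distrib sum_subtractf
        sum_distrib_left sum_distrib_right N_def)
  also have "\<dots> = h\<^sup>2 * (N - 2 * m * (N * m) + N * m\<^sup>2)"
    by (simp only: squares signs)
  finally show ?thesis
    using N unfolding N_def[symmetric] mean by (simp add: power2_eq_square field_simps)
qed

definition fair_coins :: "nat \<Rightarrow> (nat \<Rightarrow> bool) pmf" where
  "fair_coins n = Pi_pmf {..n} False (\<lambda>_. bernoulli_pmf (1/2))"

definition balanced_signs :: "nat \<Rightarrow> (nat \<Rightarrow> bool) set" where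
  "balanced_signs n = {\<epsilon>. \<bar>(\<Sum>i\<le>n. if \<epsilon> i then 1 else 0) / real (n + 1) - 1/2\<bar> < 1/4}"

lemma balanced_signs_spread:
  fixes w :: "nat \<Rightarrow> real"
  assumes "\<epsilon> \<in> balanced_signs n" "0 \<le> h"
    and w: "\<And>i. i \<le> n \<Longrightarrow> w i = a + (if \<epsilon> i then h else -h)"
  shows "h / 2 \<le> sqrt ((\<Sum>i\<le>n. (w i - (\<Sum>j\<le>n. w j) / real (n + 1))\<^sup>2) / real (n + 1))"
proof -
  define s where "s i = (if \<epsilon> i then 1 else -1 :: real)" for i
  define m where "m = (\<Sum>i\<le>n. s i) / real (n + 1)"
  define K where "K = (\<Sum>i\<le>n. if \<epsilon> i then 1 else 0 :: real)"
  have "(\<Sum>i\<le>n. s i) = (\<Sum>i\<le>n. 2 * (if \<epsilon> i then 1 else 0) - 1)"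
    by (intro sum.cong) (auto simp: s_def)
  also have "\<dots> = 2 * K - real (n + 1)"
    by (simp add: K_def sum_subtractf sum_distrib_left[symmetric])
  finally have "m = 2 * (K / real (n + 1) - 1/2)"
    by (simp add: m_def diff_divide_distrib)
  then have "\<bar>m\<bar> = 2 * \<bar>K / real (n + 1) - 1/2\<bar>"
    by (simp only: abs_mult)
  moreover have "\<bar>K / real (n + 1) - 1/2\<bar> < 1/4"
    using assms(1) by (simp add: balanced_signs_def K_def)
  ultimately have "\<bar>m\<bar> \<le> 1/2"
    by simp
  then have "m\<^sup>2 \<le> (1/2)\<^sup>2"
    by (metis abs_ge_zero power2_abs power_mono)
  have w_signs: "w i = a + h * s i" if "i \<le> n" for i
    using w[OF that] by (simp add: s_def)
  have sum_w: "(\<Sum>j\<le>n. w j) = (\<Sum>j\<le>n. a + h * s j)"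
    by (rule sum.cong) (simp_all add: w_signs)
  have "(\<Sum>i\<le>n. (w i - (\<Sum>j\<le>n. w j) / real (n + 1))\<^sup>2)
      = (\<Sum>i\<le>n. (a + h * s i - (\<Sum>j\<le>n. a + h * s j) / real (n + 1))\<^sup>2)"
    unfolding sum_w by (rule sum.cong) (simp_all add: w_signs)
  then have "(\<Sum>i\<le>n. (w i - (\<Sum>j\<le>n. w j) / real (n + 1))\<^sup>2) / real (n + 1) = h\<^sup>2 * (1 - m\<^sup>2)"
    using empirical_variance_signs[of n s a h] by (simp add: m_def s_def)
  moreover have "(h / 2)\<^sup>2 \<le> h\<^sup>2 * (1 - m\<^sup>2)"
  proof -
    have "1/4 \<le> 1 - m\<^sup>2"
      using \<open>m\<^sup>2 \<le> (1/2)\<^sup>2\<close> by (simp add: power2_eq_square)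
    then have "h\<^sup>2 * (1/4) \<le> h\<^sup>2 * (1 - m\<^sup>2)"
      by (intro mult_left_mono) simp_all
    then show ?thesis by (simp add: power_divide)
  qed
  ultimately show ?thesis
    using \<open>0 \<le> h\<close> by (metis real_le_rsqrt)
qed

definition borel_of_pmf :: "'a::topological_space pmf \<Rightarrow> 'a measure" where
  "borel_of_pmf p = distr (measure_pmf p) borel (\<lambda>x. x)"

lemma borel_of_pmf_in_Xi:
  assumes "finite (set_pmf p)" "measure_pmf.expectation p (\<lambda>z. z) = 0"
    "measure_pmf.expectation p (\<lambda>z. z\<^sup>2) = 1" "measure_pmf.expectation p (\<lambda>z. z ^ 4) \<le> C"
  shows "borel_of_pmf p \<in> Xi C"
  unfolding Xi_def borel_of_pmf_def using assms
  by (auto simp: prob_space.prob_space_distr measure_pmf.prob_space_axioms integrable_distr_eq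
      integral_distr integrable_measure_pmf_finite)

definition rademacher :: "real pmf" where
  "rademacher = pmf_of_set {-1, 1}"

lemma set_pmf_rademacher: "set_pmf rademacher = {-1, 1}"
  unfolding rademacher_def by (subst set_pmf_of_set) auto

lemma rademacher_moments:
  "measure_pmf.expectation rademacher (\<lambda>z. z) = 0"
  "measure_pmf.expectation rademacher (\<lambda>z. z\<^sup>2) = 1"
  "measure_pmf.expectation rademacher (\<lambda>z. z ^ 4) = 1"
  unfolding rademacher_def by (subst integral_pmf_of_set; simp)+

lemma rademacher_in_Xi: "1 \<le> C \<Longrightarrow> borel_of_pmf rademacher \<in> Xi C"
  by (intro borel_of_pmf_in_Xi) (simp_all add: set_pmf_rademacher rademacher_moments)

definition sign_scale :: "real \<Rightarrow> bool \<Rightarrow> real" where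
  "sign_scale h b = sqrt (1 + (if b then h else -h))"

definition scale_mixed_rademacher :: "real \<Rightarrow> real pmf" where
  "scale_mixed_rademacher h =
     bernoulli_pmf (1/2) \<bind> (\<lambda>b. map_pmf (\<lambda>z. sign_scale h b * z) rademacher)"

definition sign_scaled_rademachers :: "nat \<Rightarrow> real \<Rightarrow> (nat \<Rightarrow> bool) \<Rightarrow> (nat \<Rightarrow> real) pmf" where
  "sign_scaled_rademachers n h =
     (\<lambda>\<epsilon>. Pi_pmf {..n} undefined (\<lambda>i. map_pmf (\<lambda>z. sign_scale h (\<epsilon> i) * z) rademacher))"

lemma scale_mixed_rademacher_in_Xi:
  assumes "0 \<le> h" "h \<le> 1" "2 \<le> C"
  shows "borel_of_pmf (scale_mixed_rademacher h) \<in> Xi C"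
proof (rule borel_of_pmf_in_Xi)
  have expectation: "measure_pmf.expectation (scale_mixed_rademacher h) g
      = (measure_pmf.expectation rademacher (\<lambda>z. g (sign_scale h True * z))
         + measure_pmf.expectation rademacher (\<lambda>z. g (sign_scale h False * z))) / 2"
    for g :: "real \<Rightarrow> real"
    unfolding scale_mixed_rademacher_def bernoulli_pmf_half_conv_pmf_of_set
    by (subst pmf_expectation_bind_pmf_of_set) (auto simp: set_pmf_rademacher UNIV_bool)
  have square: "(sign_scale h b)\<^sup>2 = 1 + (if b then h else -h)" for b
    using assms by (simp add: sign_scale_def)
  have fourth: "(sign_scale h b) ^ 4 = (1 + (if b then h else -h))\<^sup>2" for b
    by (metis square power_mult numeral_Bit0 mult_2_right numeral_One power2_eq_square)
  show "finite (set_pmf (scale_mixed_rademacher h))"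
    by (simp add: scale_mixed_rademacher_def set_pmf_rademacher)
  show "measure_pmf.expectation (scale_mixed_rademacher h) (\<lambda>z. z) = 0"
    by (simp add: expectation rademacher_moments)
  show "measure_pmf.expectation (scale_mixed_rademacher h) (\<lambda>z. z\<^sup>2) = 1"
    by (simp add: expectation rademacher_moments power_mult_distrib square)
  have "measure_pmf.expectation (scale_mixed_rademacher h) (\<lambda>z. z ^ 4) = 1 + h\<^sup>2"
    by (simp add: expectation rademacher_moments power_mult_distrib fourth)
      (simp add: power2_eq_square algebra_simps)
  also have "\<dots> \<le> C"
    using assms power_le_one[of h 2] by simp
  finally show "measure_pmf.expectation (scale_mixed_rademacher h) (\<lambda>z. z ^ 4) \<le> C" .
qed

lemma PiM_borel_of_pmf:
  fixes p :: "'i \<Rightarrow> 'a::topological_space pmf"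
  assumes "finite I"
  shows "PiM I (\<lambda>i. borel_of_pmf (p i)) = distr (Pi_pmf I d p) (PiM I (\<lambda>_. borel)) (\<lambda>x. restrict x I)"
proof -
  interpret product_prob_space "\<lambda>i. borel_of_pmf (p i)"
    unfolding borel_of_pmf_def
    by (intro product_prob_spaceI prob_space.prob_space_distr measure_pmf.prob_space_axioms) simp
  have restrict_measurable: "(\<lambda>x. restrict x I) \<in> measurable (Pi_pmf I d p) (PiM I (\<lambda>_. borel))"
    by (simp add: space_PiM)
  show ?thesis
  proof (rule PiM_eqI[symmetric])
    show "sets (distr (Pi_pmf I d p) (PiM I (\<lambda>_. borel)) (\<lambda>x. restrict x I))
        = sets (PiM I (\<lambda>i. borel_of_pmf (p i)))"
      by (simp add: borel_of_pmf_def cong: sets_PiM_cong)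
  next
    fix A assume A: "\<And>i. i \<in> I \<Longrightarrow> A i \<in> sets (borel_of_pmf (p i))"
    then have "Pi\<^sub>E I A \<in> sets (PiM I (\<lambda>_. borel))"
      using assms by (intro sets_PiM_I_finite) (auto simp: borel_of_pmf_def)
    then have "emeasure (distr (Pi_pmf I d p) (PiM I (\<lambda>_. borel)) (\<lambda>x. restrict x I)) (Pi\<^sub>E I A)
        = emeasure (Pi_pmf I d p) ((\<lambda>x. restrict x I) -` Pi\<^sub>E I A)"
      using restrict_measurable by (subst emeasure_distr) auto
    also have "\<dots> = emeasure (Pi_pmf I d p) (PiE_dflt I d A)"
      using assms by (intro emeasure_eq_AE AE_pmfI) (auto simp: PiE_dflt_def set_Pi_pmf)
    also have "\<dots> = (\<Prod>i\<in>I. emeasure (borel_of_pmf (p i)) (A i))"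
      using assms A
      by (simp add: measure_pmf.emeasure_eq_measure measure_Pi_pmf_PiE_dflt prod_ennreal
          borel_of_pmf_def emeasure_distr)
    finally show "emeasure (distr (Pi_pmf I d p) (PiM I (\<lambda>_. borel)) (\<lambda>x. restrict x I)) (Pi\<^sub>E I A)
        = (\<Prod>i\<in>I. emeasure (borel_of_pmf (p i)) (A i))" .
  qed (use assms in simp)
qed

lemma data_law_borel_of_pmf:
  "data_law n f V (borel_of_pmf r) = distr
     (Pi_pmf {..n} undefined (\<lambda>i. map_pmf (\<lambda>z. f (design n i) + sqrt (V (design n i)) * z) r))
     (PiM {..n} (\<lambda>_. borel)) (\<lambda>x. restrict x {..n})"
proof -
  have "data_law n f V (borel_of_pmf r)
      = PiM {..n} (\<lambda>i. borel_of_pmf (map_pmf (\<lambda>z. f (design n i) + sqrt (V (design n i)) * z) r))"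
    unfolding data_law_def borel_of_pmf_def
    by (intro PiM_cong refl) (simp add: distr_distr comp_def map_pmf_rep_eq)
  then show ?thesis by (simp add: PiM_borel_of_pmf)
qed

lemma measure_data_law_borel_of_pmf:
  assumes "\<phi> \<in> tests n"
  shows "measure (data_law n f V (borel_of_pmf r)) {y \<in> space (data_law n f V (borel_of_pmf r)). Q (\<phi> y)}
    = measure_pmf.prob
        (Pi_pmf {..n} undefined (\<lambda>i. map_pmf (\<lambda>z. f (design n i) + sqrt (V (design n i)) * z) r))
        {x. Q (\<phi> (restrict x {..n}))}"
proof -
  have "{y \<in> space (PiM {..n} (\<lambda>_. borel :: real measure)). Q (\<phi> y)}
      = \<phi> -` {b. Q b} \<inter> space (PiM {..n} (\<lambda>_. borel))"
    by auto
  also have "\<dots> \<in> sets (PiM {..n} (\<lambda>_. borel))"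
    using assms unfolding tests_def by (intro measurable_sets) auto
  finally show ?thesis
    unfolding data_law_borel_of_pmf
    by (subst measure_distr) (auto simp: space_PiM intro!: arg_cong2[where f=measure])
qed

lemma prob_space_data_law:
  assumes "P \<in> Xi C"
  shows "prob_space (data_law n f V P)"
  unfolding data_law_def
proof (intro prob_space_PiM prob_space.prob_space_distr)
  show "prob_space P" using assms by (simp add: Xi_def)
  have "sets P = sets borel" using assms by (simp add: Xi_def)
  then show "(\<lambda>z. f (design n i) + sqrt (V (design n i)) * z) \<in> borel_measurable P" for i
    by (subst measurable_cong_sets[OF _ refl]) (assumption, measurable)
qed

lemma measure_data_law_le_SUP:
  assumes "(f, V, P) \<in> S" "\<And>f V P. (f, V, P) \<in> S \<Longrightarrow> P \<in> Xi C"
  shows "measure (data_law n f V P) (E f V P)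
    \<le> (SUP (f, V, P)\<in>S. measure (data_law n f V P) (E f V P))"
proof -
  have "bdd_above ((\<lambda>(f, V, P). measure (data_law n f V P) (E f V P)) ` S)"
  proof (rule bdd_aboveI)
    fix x assume "x \<in> (\<lambda>(f, V, P). measure (data_law n f V P) (E f V P)) ` S"
    then obtain f V P where "x = measure (data_law n f V P) (E f V P)" "P \<in> Xi C"
      using assms(2) by auto
    then show "x \<le> 1"
      using prob_space.prob_le_1[OF prob_space_data_law] by simp
  qed
  from cSUP_upper[OF assms(1) this] show ?thesis by simp
qed

lemma prob_bind_pmf_ge:
  assumes "0 \<le> S" and alt: "\<And>a. a \<in> G \<Longrightarrow> a \<in> set_pmf p \<Longrightarrow> measure_pmf.prob (g a) (- E) \<le> S"
  shows "measure_pmf.prob p G - S \<le> measure_pmf.prob (p \<bind> g) E"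
proof -
  have "measure_pmf.prob p G * (1 - S) = (\<integral>a. indicator G a * (1 - S) \<partial>p)"
    by simp
  also have "\<dots> \<le> (\<integral>a. measure_pmf.prob (g a) E \<partial>p)"
  proof (rule integral_mono_AE)
    show "AE a in p. indicator G a * (1 - S) \<le> measure_pmf.prob (g a) E"
    proof (rule AE_pmfI)
      fix a assume "a \<in> set_pmf p"
      then show "indicator G a * (1 - S) \<le> measure_pmf.prob (g a) E"
        using alt[of a] measure_pmf.prob_compl[of E "g a"] \<open>0 \<le> S\<close>
        by (auto simp: indicator_def Compl_eq_Diff_UNIV)
    qed
    show "integrable p (\<lambda>a. measure_pmf.prob (g a) E)"
      by (intro measure_pmf.integrable_const_bound[where B=1]) auto
  qed (simp add: measure_pmf.integrable_const_bound[where B=1])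
  also have "\<dots> = measure_pmf.prob (p \<bind> g) E"
    unfolding measure_pmf_bind
    by (rule measure_pmf.measure_bind[symmetric])
      (auto simp: measurable_def space_subprob_algebra measure_pmf.subprob_space_axioms)
  finally show ?thesis
    using \<open>0 \<le> S\<close> measure_pmf.prob_le_1[of p G] mult_left_le[of "measure_pmf.prob p G" S]
    by (simp add: algebra_simps)
qed
lemma Pi_pmf_scale_mixed_rademacher:
  "Pi_pmf {..n} undefined (\<lambda>_. scale_mixed_rademacher h) = fair_coins n \<bind> sign_scaled_rademachers n h"
  unfolding scale_mixed_rademacher_def fair_coins_def sign_scaled_rademachers_def
  by (rule Pi_pmf_bind) simp

lemma prob_fair_coins_unbalanced:
  "measure_pmf.prob (fair_coins n) (- balanced_signs n) \<le> 2 * exp (- real (n + 1) / 8)"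
proof -
  interpret binomial_distribution "n + 1" "1/2" by unfold_locales simp
  have "- balanced_signs n
      = {\<epsilon>. 1/4 \<le> \<bar>(\<Sum>i\<le>n. if \<epsilon> i then 1 else 0) / real (n + 1) - 1/2\<bar>}"
    by (auto simp: balanced_signs_def)
  then have "measure_pmf.prob (fair_coins n) (- balanced_signs n)
    = measure_pmf.prob (binomial_pmf (n + 1) (1/2)) {k. 1/4 \<le> \<bar>real k / real (n + 1) - 1/2\<bar>}"
    using prob_binomial_pmf_conv_coins[of "\<lambda>r. 1/4 \<le> \<bar>r / real (n + 1) - 1/2\<bar>"]
    by (simp add: fair_coins_def lessThan_Suc_atMost)
  also have "\<dots> \<le> 2 * exp (- 2 * real (n + 1) * (1/4)\<^sup>2)"
    using prob_abs_ge'[of "1/4"] by simp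
  also have "- 2 * real (n + 1) * (1/4)\<^sup>2 = - real (n + 1) / 8"
    by (simp add: power2_eq_square)
  finally show ?thesis .
qed

definition sign_variance :: "nat \<Rightarrow> real \<Rightarrow> real \<Rightarrow> (nat \<Rightarrow> bool) \<Rightarrow> real \<Rightarrow> real" where
  "sign_variance n \<beta> h \<epsilon> = mcshane_ext n \<beta> (\<lambda>j. 1 + (if \<epsilon> j then h else -h))"

lemma sign_variance_design:
  assumes "1 \<le> n" "0 < \<beta>" "0 \<le> h" "2 * h \<le> real n powr (-\<beta>)" "i \<le> n"
  shows "sign_variance n \<beta> h \<epsilon> (design n i) = 1 + (if \<epsilon> i then h else -h)"
  unfolding sign_variance_def using assms by (intro mcshane_ext_design) auto

lemma sign_variance_in_D1:
  assumes "1 \<le> n" "0 < \<beta>" "\<beta> < 1" "3 \<le> M" "0 \<le> h" "h \<le> 1/2" "2 * h \<le> real n powr (-\<beta>)"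
    and "\<epsilon> \<in> balanced_signs n"
  shows "sign_variance n \<beta> h \<epsilon> \<in> D1 M \<beta> n (h / 2)"
proof -
  have data_range: "0 \<le> 1 + (if \<epsilon> j then h else -h) \<and> 1 + (if \<epsilon> j then h else -h) \<le> 3/2" for j
    using assms by auto
  have bounds: "0 \<le> sign_variance n \<beta> h \<epsilon> x" "sign_variance n \<beta> h \<epsilon> x \<le> M"
    if "x \<in> {0..1}" for x
    using mcshane_ext_bounds[where n=n and v="\<lambda>j. 1 + (if \<epsilon> j then h else -h)" and B="3/2",
        OF \<open>0 < \<beta>\<close> data_range that] \<open>3 \<le> M\<close>
    unfolding sign_variance_def by auto
  have "hoelder \<beta> M (sign_variance n \<beta> h \<epsilon>)"
  proof (rule hoelderI_less_one)
    fix x y :: real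
    have "\<bar>sign_variance n \<beta> h \<epsilon> x - sign_variance n \<beta> h \<epsilon> y\<bar> \<le> 1 * \<bar>x - y\<bar> powr \<beta>"
      unfolding sign_variance_def using assms by (simp add: mcshane_ext_hoelder)
    also have "\<dots> \<le> M * \<bar>x - y\<bar> powr \<beta>"
      using \<open>3 \<le> M\<close> by (intro mult_right_mono) auto
    finally show "\<bar>sign_variance n \<beta> h \<epsilon> x - sign_variance n \<beta> h \<epsilon> y\<bar> \<le> M * \<bar>x - y\<bar> powr \<beta>" .
  qed (use assms bounds in auto)
  moreover have "h / 2 \<le> sqrt ((\<Sum>i\<le>n. (sign_variance n \<beta> h \<epsilon> (design n i)
      - (\<Sum>j\<le>n. sign_variance n \<beta> h \<epsilon> (design n j)) / real (n + 1))\<^sup>2) / real (n + 1))"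
    using assms by (intro balanced_signs_spread[where a=1]) (auto simp: sign_variance_design)
  ultimately show ?thesis
    using bounds by (simp add: D1_def Vbar_def)
qed

lemma measure_null_data_law:
  assumes "\<phi> \<in> tests n"
  shows "measure (data_law n (\<lambda>_. 0) (\<lambda>_. 1) (borel_of_pmf (scale_mixed_rademacher h)))
      {y \<in> space (data_law n (\<lambda>_. 0) (\<lambda>_. 1) (borel_of_pmf (scale_mixed_rademacher h))). \<phi> y}
    = measure_pmf.prob (fair_coins n \<bind> sign_scaled_rademachers n h) {x. \<phi> (restrict x {..n})}"
  using measure_data_law_borel_of_pmf[OF assms, of "\<lambda>_. 0" "\<lambda>_. 1" "scale_mixed_rademacher h" "\<lambda>b. b"]
  by (simp add: Pi_pmf_scale_mixed_rademacher)

lemma measure_sign_variance_data_law: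
  assumes "\<phi> \<in> tests n" "1 \<le> n" "0 < \<beta>" "0 \<le> h" "2 * h \<le> real n powr (-\<beta>)"
  shows "measure (data_law n (\<lambda>_. 0) (sign_variance n \<beta> h \<epsilon>) (borel_of_pmf rademacher))
      {y \<in> space (data_law n (\<lambda>_. 0) (sign_variance n \<beta> h \<epsilon>) (borel_of_pmf rademacher)). \<not> \<phi> y}
    = measure_pmf.prob (sign_scaled_rademachers n h \<epsilon>) (- {x. \<phi> (restrict x {..n})})"
proof -
  have "Pi_pmf {..n} undefined
      (\<lambda>i. map_pmf (\<lambda>z. 0 + sqrt (sign_variance n \<beta> h \<epsilon> (design n i)) * z) rademacher)
    = sign_scaled_rademachers n h \<epsilon>"
    unfolding sign_scaled_rademachers_def using assms
    by (intro Pi_pmf_cong refl map_pmf_cong) (auto simp: sign_variance_design sign_scale_def)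
  then show ?thesis
    using measure_data_law_borel_of_pmf[OF assms(1), of "\<lambda>_. 0" "sign_variance n \<beta> h \<epsilon>" rademacher Not]
    by (simp add: Compl_eq)
qed

lemma prob_fair_coins_balanced:
  assumes "0 < \<eta>" "16 / \<eta> \<le> real n"
  shows "1 - \<eta> \<le> measure_pmf.prob (fair_coins n) (balanced_signs n)"
proof -
  define y where "y = real (n + 1) / 8"
  have "0 < y" by (simp add: y_def)
  have "exp (- real (n + 1) / 8) = inverse (exp y)"
    by (simp only: y_def minus_divide_left[symmetric] exp_minus)
  also have "\<dots> \<le> inverse y"
    using \<open>0 < y\<close> exp_ge_add_one_self[of y] by (intro le_imp_inverse_le) linarith+
  also have "\<dots> \<le> \<eta> / 2"
    using assms by (simp add: y_def field_simps)
  finally have "measure_pmf.prob (fair_coins n) (- balanced_signs n) \<le> \<eta>"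
    using prob_fair_coins_unbalanced[of n] by linarith
  moreover have "measure_pmf.prob (fair_coins n) (- balanced_signs n)
      = 1 - measure_pmf.prob (fair_coins n) (balanced_signs n)"
    using measure_pmf.prob_compl[of "balanced_signs n" "fair_coins n"]
    by (simp add: Compl_eq_Diff_UNIV)
  ultimately show ?thesis by simp
qed

lemma test_errors_sum_ge:
  fixes M C\<xi> \<alpha> \<beta> \<eta> c :: real and n :: nat
  assumes "3 \<le> M" "2 \<le> C\<xi>" "0 < \<beta>" "\<beta> < 1" "0 < \<eta>" "\<eta> < 1" "0 < c" "c < 1/4"
    and "16 / \<eta> \<le> real n" and \<phi>: "\<phi> \<in> tests n"
  shows "1 - \<eta> \<le> (SUP (f, V, P)\<in>{(f, V, P). hoelder \<alpha> M f \<and> V \<in> D0 M n \<and> P \<in> Xi C\<xi>}.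
               measure (data_law n f V P) {y \<in> space (data_law n f V P). \<phi> y})
         + (SUP (f, V, P)\<in>{(f, V, P). hoelder \<alpha> M f \<and> V \<in> D1 M \<beta> n (c * real n powr (- \<beta>)) \<and> P \<in> Xi C\<xi>}.
               measure (data_law n f V P) {y \<in> space (data_law n f V P). \<not> \<phi> y})"
    (is "_ \<le> ?type_I + ?type_II")
proof -
  have "16 \<le> 16 / \<eta>"
    using \<open>0 < \<eta>\<close> \<open>\<eta> < 1\<close> by (simp add: field_simps)
  then have "1 \<le> n"
    using \<open>16 / \<eta> \<le> real n\<close> by simp
  define h where "h = 2 * c * real n powr (- \<beta>)"
  have "0 < real n powr (- \<beta>)" "real n powr (- \<beta>) \<le> 1"
    using \<open>1 \<le> n\<close> \<open>0 < \<beta>\<close> by (auto intro: powr_le_one_le ge_one_powr_ge_zero simp: powr_minus_divide)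
  then have "0 < c * real n powr (- \<beta>)" "4 * c * real n powr (- \<beta>) \<le> 1 * real n powr (- \<beta>)"
    using \<open>0 < c\<close> \<open>c < 1/4\<close> by (simp, intro mult_right_mono) simp_all
  then have h: "0 \<le> h" "h \<le> 1/2" "2 * h \<le> real n powr (- \<beta>)" "h / 2 = c * real n powr (- \<beta>)"
    using \<open>real n powr (- \<beta>) \<le> 1\<close> unfolding h_def by auto
  define rejects where "rejects = {x. \<phi> (restrict x {..n})}"
  have type_I: "measure_pmf.prob (fair_coins n \<bind> sign_scaled_rademachers n h) rejects \<le> ?type_I"
    unfolding rejects_def measure_null_data_law[OF \<phi>, symmetric]
    using h hoelder_zero[of M \<alpha>] scale_mixed_rademacher_in_Xi[of h C\<xi>] assms
    by (intro measure_data_law_le_SUP[where E="\<lambda>f V P. {y \<in> space (data_law n f V P). \<phi> y}"])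
      (auto simp: D0_def intro!: exI[of _ 1])
  have type_II: "measure_pmf.prob (sign_scaled_rademachers n h \<epsilon>) (- rejects) \<le> ?type_II"
    if "\<epsilon> \<in> balanced_signs n" for \<epsilon>
    unfolding rejects_def measure_sign_variance_data_law[OF \<phi> \<open>1 \<le> n\<close> \<open>0 < \<beta>\<close> h(1,3), symmetric]
    using h that hoelder_zero[of M \<alpha>] rademacher_in_Xi[of C\<xi>] assms \<open>1 \<le> n\<close>
      sign_variance_in_D1[of n \<beta> M h \<epsilon>]
    by (intro measure_data_law_le_SUP[where E="\<lambda>f V P. {y \<in> space (data_law n f V P). \<not> \<phi> y}"])
      auto
  have balanced: "1 - \<eta> \<le> measure_pmf.prob (fair_coins n) (balanced_signs n)"
    using assms by (intro prob_fair_coins_balanced)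
  then obtain \<epsilon> where "\<epsilon> \<in> balanced_signs n"
    using \<open>\<eta> < 1\<close> by (metis all_not_in_conv diff_gt_0_iff_gt measure_empty not_le)
  then have "0 \<le> ?type_II"
    using type_II measure_nonneg order.trans by blast
  then have "measure_pmf.prob (fair_coins n) (balanced_signs n) - ?type_II
      \<le> measure_pmf.prob (fair_coins n \<bind> sign_scaled_rademachers n h) rejects"
    using type_II by (intro prob_bind_pmf_ge)
  then show ?thesis
    using type_I balanced by linarith
qed

lemma INF_test_errors_sum_ge:
  fixes M C\<xi> \<alpha> \<beta> \<eta> c :: real and n :: nat
  assumes "3 \<le> M" "2 \<le> C\<xi>" "0 < \<beta>" "\<beta> < 1" "0 < \<eta>" "\<eta> < 1" "0 < c" "c < 1/4"
    and "16 / \<eta> \<le> real n"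
  shows "1 - \<eta> \<le> (INF \<phi>\<in>tests n.
           (SUP (f, V, P)\<in>{(f, V, P). hoelder \<alpha> M f \<and> V \<in> D0 M n \<and> P \<in> Xi C\<xi>}.
               measure (data_law n f V P) {y \<in> space (data_law n f V P). \<phi> y})
         + (SUP (f, V, P)\<in>{(f, V, P). hoelder \<alpha> M f \<and> V \<in> D1 M \<beta> n (c * real n powr (- \<beta>)) \<and> P \<in> Xi C\<xi>}.
               measure (data_law n f V P) {y \<in> space (data_law n f V P). \<not> \<phi> y}))"
proof (rule cINF_greatest)
  show "tests n \<noteq> {}"
    unfolding tests_def by (metis empty_iff measurable_const UNIV_I space_count_space)
qed (use assms in \<open>rule test_errors_sum_ge\<close>)

theorem proposition5p4:
  shows "\<exists>M0 C0. \<forall>M\<ge>M0. \<forall>C\<xi>\<ge>C0. \<forall>\<alpha> \<beta> \<eta> :: real.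
     \<alpha> > 0 \<longrightarrow> 0 < \<beta> \<longrightarrow> \<beta> < 1/4 \<longrightarrow> 0 < \<eta> \<longrightarrow> \<eta> < 1 \<longrightarrow>
     (\<exists>c\<eta> > 0. \<exists>N::nat. \<forall>c. 0 < c \<longrightarrow> c < c\<eta> \<longrightarrow> (\<forall>n\<ge>N.
        (INF \<phi>\<in>tests n.
           (SUP (f, V, P)\<in>{(f, V, P). hoelder \<alpha> M f \<and> V \<in> D0 M n \<and> P \<in> Xi C\<xi>}.
               measure (data_law n f V P) {y \<in> space (data_law n f V P). \<phi> y})
         + (SUP (f, V, P)\<in>{(f, V, P). hoelder \<alpha> M f \<and> V \<in> D1 M \<beta> n (c * real n powr (- \<beta>)) \<and> P \<in> Xi C\<xi>}.
               measure (data_law n f V P) {y \<in> space (data_law n f V P). \<not> \<phi> y}))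
        \<ge> 1 - \<eta>))"
  apply (rule exI[of _ 3], rule exI[of _ 2], intro allI impI)
  subgoal for M C\<xi> \<alpha> \<beta> \<eta>
    by (intro exI[of _ "1/4"] exI[of _ "nat \<lceil>16 / \<eta>\<rceil>"] conjI allI impI INF_test_errors_sum_ge)
      linarith+
  done

end
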